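(* Let $\mathrm{FOV}_{\min}\in(0,\pi/2]$, $L_{\max}>0$, $A_{\max}>0$. The constrained problem of maximising $R(B,\mathrm{FOV})$ over $B>0$, $\mathrm{FOV}\in(0,\pi/2]$ subject to $\mathrm{FOV}\ge\mathrm{FOV}_{\min}$, $L_{\mathrm{ADR}}(B,\mathrm{FOV})\le L_{\max}$ and $A_{\mathrm{ADR}}(B,\mathrm{FOV})\le A_{\max}$ is equivalent to the single-variable problem of maximising $B\mapsto R(B,f_{\mathrm{FOV}}(B))$ over $\{B>0: f_{\mathrm{FOV}}(B)\le\pi/2\}$: the two suprema coincide, and $(B^*,\mathrm{FOV}^* )$ is a maximiser of the constrained problem if and only if $\mathrm{FOV}^*=f_{\mathrm{FOV}}(B^* )$ and $B^*$ maximises $R(B,f_{\mathrm{FOV}}(B))$ over that set.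
   Context: Fix constants: an integer $N_{\mathrm{tier}}\ge1$; an integer $N_{\mathrm{PD}}\ge 1$; $\mathrm{FF}\in(0,1]$; $K_{\mathrm{PD}}>0$; $n_{\mathrm{CPC}}\ge 1$; $P_{\mathrm t}>0$; $w>0$; $R_{\mathrm{PD}}>0$; $\Gamma>0$; $N_0>0$. The design variables are $B>0$ and $\mathrm{FOV}\in(0,\pi/2]$. Write $\theta=\theta_{\mathrm{CPC}}=\mathrm{FOV}/(2N_{\mathrm{tier}}+1)$. Define $D_2(B)=\frac{1}{K_{\mathrm{PD}}B}\sqrt{N_{\mathrm{PD}}/\mathrm{FF}}$, $D_1(B,\mathrm{FOV})=D_2(B)\,\frac{n_{\mathrm{CPC}}}{\sin\theta}$, $P_{\mathrm r}(B,\mathrm{FOV})=\mathrm{FF}\,P_{\mathrm t}\Big(1-\exp\Big(-\frac{D_1(B,\mathrm{FOV})^2}{2w^2}\Big)\Big)$, and the achievable rate $R(B,\mathrm{FOV})=B\log_2\Big(1+\frac{(R_{\mathrm{PD}}P_{\mathrm r}(B,\mathrm{FOV}))^2}{\Gamma N_0 B}\Big)$. Set $K_1=\frac{1}{2K_{\mathrm{PD}}}\sqrt{N_{\mathrm{PD}}/\mathrm{FF}}$ and $K_2=\frac{\pi N_{\mathrm{PD}}n_{\mathrm{CPC}}^2}{4\,\mathrm{FF}\,K_{\mathrm{PD}}^2}$, and define $L_{\mathrm{ADR}}(B,\mathrm{FOV})=\frac{K_1}{B}\cdot\frac{n_{\mathrm{CPC}}+\sin\theta}{\sin\theta\,\tan\theta}$,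 $A_{\mathrm{ADR}}(B,\mathrm{FOV})=\frac{K_2}{B^2\sin^2\theta}\Big(1+\sum_{i=1}^{N_{\mathrm{tier}}}6i\cos(2i\theta)\Big)$. Given $L_{\max},A_{\max}>0$, define for $\mathrm{FOV}\in(0,\pi/2]$ the boundary functions $f_{\mathrm L}(\mathrm{FOV})=\frac{K_1}{L_{\max}}\cdot\frac{n_{\mathrm{CPC}}+\sin\theta}{\sin\theta\tan\theta}$ and $f_{\mathrm A}(\mathrm{FOV})=\frac{1}{\sin\theta}\sqrt{\frac{K_2}{A_{\max}}\Big(1+\sum_{i=1}^{N_{\mathrm{tier}}}6i\cos(2i\theta)\Big)}$, their (generalised) inverses $f_{\mathrm L}^{-1}(B)=\inf\{\mathrm{FOV}\in(0,\pi/2]: f_{\mathrm L}(\mathrm{FOV})\le B\}$ and $f_{\mathrm A}^{-1}(B)=\inf\{\mathrm{FOV}\in(0,\pi/2]: f_{\mathrm A}(\mathrm{FOV})\le B\}$ (with $\inf\emptyset=+\infty$), and $f_{\mathrm{FOV}}(B)=\max\{\mathrm{FOV}_{\min},\,f_{\mathrm L}^{-1}(B),\,f_{\mathrm A}^{-1}(B)\}$. *)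

theory Defs
  imports "HOL-Analysis.Analysis"
begin

text \<open>Parameters: Nt = N_tier, Npd = N_PD, FF, Kpd = K_PD, n = n_CPC, Pt = P_t, w,
  Rpd = R_PD, Gam = Gamma, N0.\<close>

definition theta :: "nat \<Rightarrow> real \<Rightarrow> real" where
  "theta Nt FOV = FOV / (2 * real Nt + 1)"

definition D2 :: "nat \<Rightarrow> real \<Rightarrow> real \<Rightarrow> real \<Rightarrow> real" where
  "D2 Npd FF Kpd B = 1 / (Kpd * B) * sqrt (real Npd / FF)"

definition D1 :: "nat \<Rightarrow> nat \<Rightarrow> real \<Rightarrow> real \<Rightarrow> real \<Rightarrow> real \<Rightarrow> real \<Rightarrow> real" where
  "D1 Nt Npd FF Kpd n B FOV = D2 Npd FF Kpd B * (n / sin (theta Nt FOV))"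

definition Pr :: "nat \<Rightarrow> nat \<Rightarrow> real \<Rightarrow> real \<Rightarrow> real \<Rightarrow> real \<Rightarrow> real \<Rightarrow> real \<Rightarrow> real \<Rightarrow> real" where
  "Pr Nt Npd FF Kpd n Pt w B FOV =
     FF * Pt * (1 - exp (- ((D1 Nt Npd FF Kpd n B FOV)^2 / (2 * w^2))))"

definition rate :: "nat \<Rightarrow> nat \<Rightarrow> real \<Rightarrow> real \<Rightarrow> real \<Rightarrow> real \<Rightarrow> real \<Rightarrow> real \<Rightarrow> real \<Rightarrow> real
                     \<Rightarrow> real \<Rightarrow> real \<Rightarrow> real" where
  "rate Nt Npd FF Kpd n Pt w Rpd Gam N0 B FOV =
     B * log 2 (1 + (Rpd * Pr Nt Npd FF Kpd n Pt w B FOV)^2 / (Gam * N0 * B))"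

definition K1 :: "nat \<Rightarrow> real \<Rightarrow> real \<Rightarrow> real" where
  "K1 Npd FF Kpd = 1 / (2 * Kpd) * sqrt (real Npd / FF)"

definition K2 :: "nat \<Rightarrow> real \<Rightarrow> real \<Rightarrow> real \<Rightarrow> real" where
  "K2 Npd FF Kpd n = pi * real Npd * n^2 / (4 * FF * Kpd^2)"

definition tier_sum :: "nat \<Rightarrow> real \<Rightarrow> real" where
  "tier_sum Nt th = 1 + (\<Sum>i = 1..Nt. 6 * real i * cos (2 * real i * th))"

definition L_ADR :: "nat \<Rightarrow> nat \<Rightarrow> real \<Rightarrow> real \<Rightarrow> real \<Rightarrow> real \<Rightarrow> real \<Rightarrow> real" where
  "L_ADR Nt Npd FF Kpd n B FOV =
     K1 Npd FF Kpd / B * ((n + sin (theta Nt FOV)) / (sin (theta Nt FOV) * tan (theta Nt FOV)))"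

definition A_ADR :: "nat \<Rightarrow> nat \<Rightarrow> real \<Rightarrow> real \<Rightarrow> real \<Rightarrow> real \<Rightarrow> real \<Rightarrow> real" where
  "A_ADR Nt Npd FF Kpd n B FOV =
     K2 Npd FF Kpd n / (B^2 * (sin (theta Nt FOV))^2) * tier_sum Nt (theta Nt FOV)"

definition fL :: "nat \<Rightarrow> nat \<Rightarrow> real \<Rightarrow> real \<Rightarrow> real \<Rightarrow> real \<Rightarrow> real \<Rightarrow> real" where
  "fL Nt Npd FF Kpd n Lmax FOV =
     K1 Npd FF Kpd / Lmax * ((n + sin (theta Nt FOV)) / (sin (theta Nt FOV) * tan (theta Nt FOV)))"

definition fA :: "nat \<Rightarrow> nat \<Rightarrow> real \<Rightarrow> real \<Rightarrow> real \<Rightarrow> real \<Rightarrow> real \<Rightarrow> real" where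
  "fA Nt Npd FF Kpd n Amax FOV =
     1 / sin (theta Nt FOV) * sqrt (K2 Npd FF Kpd n / Amax * tier_sum Nt (theta Nt FOV))"

text \<open>Generalised inverse: inf {FOV in (0, pi/2]. f FOV <= B}, with inf of the empty set = +infinity.\<close>
definition gen_inv :: "(real \<Rightarrow> real) \<Rightarrow> real \<Rightarrow> ereal" where
  "gen_inv f B = (INF F \<in> {F. 0 < F \<and> F \<le> pi / 2 \<and> f F \<le> B}. ereal F)"

definition fFOV :: "nat \<Rightarrow> nat \<Rightarrow> real \<Rightarrow> real \<Rightarrow> real \<Rightarrow> real \<Rightarrow> real \<Rightarrow> real \<Rightarrow> real \<Rightarrow> ereal" where
  "fFOV Nt Npd FF Kpd n FOVmin Lmax Amax B =
     max (ereal FOVmin) (max (gen_inv (fL Nt Npd FF Kpd n Lmax) B) (gen_inv (fA Nt Npd FF Kpd n Amax) B))"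

end

theory Submission
  imports Defs
begin

(* For fixed B, both constraint functions decrease as FOV grows: theta = FOV/(2 N_tier + 1)
   stays in (0, pi/4), where sin and tan increase and every cosine of the tier sum decreases.
   Hence each constraint holds exactly on an up-interval of FOVs, closed by continuity of f_L
   and f_A, so the feasible FOVs for B are precisely [f_FOV(B), pi/2].  The rate, on the other
   hand, strictly decreases in FOV: a larger theta shrinks the diameter D1 and with it the
   received power.  So for every B the best FOV is the smallest feasible one, f_FOV(B), and the
   two problems have the same supremum and the same maximisers. *)

lemma theta_le_iff [simp]: "theta Nt x \<le> theta Nt y \<longleftrightarrow> x \<le> y"
  unfolding theta_def by (simp add: divide_le_cancel add_pos_nonneg)

lemma theta_less_iff [simp]: "theta Nt x < theta Nt y \<longleftrightarrow> x < y"
  unfolding theta_def by (simp add: divide_less_cancel add_pos_nonneg)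

lemma theta_pos: "0 < F \<Longrightarrow> 0 < theta Nt F"
  unfolding theta_def by simp

lemma mult_theta_less_pi_half:
  assumes "i \<le> Nt" "0 < F" "F \<le> pi/2"
  shows "2 * real i * theta Nt F < pi/2"
proof -
  have "2 * real i * theta Nt F \<le> 2 * real Nt * F / (2 * real Nt + 1)"
    unfolding theta_def using assms by (simp add: divide_right_mono mult_right_mono)
  also have "\<dots> < F" using assms by (simp add: field_simps)
  finally show ?thesis using assms by simp
qed

lemma theta_less_pi_half:
  assumes "1 \<le> Nt" "0 < F" "F \<le> pi/2"
  shows "theta Nt F < pi/2"
proof -
  have "2 * theta Nt F < pi/2" using mult_theta_less_pi_half[OF assms] by simp
  then show ?thesis using theta_pos[OF assms(2), of Nt] by linarith
qed

lemma trig_theta_pos: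
  assumes "1 \<le> Nt" "0 < F" "F \<le> pi/2"
  shows "0 < sin (theta Nt F)" "0 < cos (theta Nt F)" "0 < tan (theta Nt F)"
  using theta_pos[OF assms(2)] theta_less_pi_half[OF assms]
  by (auto intro: sin_gt_zero2 cos_gt_zero tan_gt_zero)

lemma trig_theta_nonzero:
  assumes "1 \<le> Nt" "0 < F" "F \<le> pi/2"
  shows "sin (theta Nt F) \<noteq> 0" "cos (theta Nt F) \<noteq> 0" "tan (theta Nt F) \<noteq> 0"
  using trig_theta_pos[OF assms] by auto

lemma strict_mono_on_sin_theta:
  assumes "1 \<le> Nt"
  shows "strict_mono_on {0<..pi/2} (\<lambda>F. sin (theta Nt F))"
proof (rule strict_mono_onI)
  fix x y assume "x \<in> {0<..pi/2}" "y \<in> {0<..pi/2}" "x < y"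
  then show "sin (theta Nt x) < sin (theta Nt y)"
    using theta_pos[of x Nt] theta_less_pi_half[OF assms, of y] by (intro sin_monotone_2pi) auto
qed

lemma continuous_on_theta [continuous_intros]: "continuous_on A (theta Nt)"
  unfolding theta_def[abs_def] by (intro continuous_intros) simp

lemma sin_tan_quotient_antimono:
  fixes c x y :: real
  assumes "0 \<le> c" "0 < x" "x \<le> y" "y < pi/2"
  shows "(c + sin y) / (sin y * tan y) \<le> (c + sin x) / (sin x * tan x)"
proof -
  have sin: "0 < sin x" "sin x \<le> sin y"
    using assms by (auto intro: sin_gt_zero2 sin_monotone_2pi_le)
  have tan: "0 < tan x" "tan x \<le> tan y"
    using assms by (auto intro: tan_gt_zero tan_mono_le)
  have sum_form: "(c + sin z) / (sin z * tan z) = c / (sin z * tan z) + 1 / tan z"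
    if "0 < sin z" "0 < tan z" for z
    using that by (simp add: field_simps)
  have "c / (sin y * tan y) \<le> c / (sin x * tan x)"
    using assms(1) sin tan by (intro divide_left_mono mult_mono mult_pos_pos) auto
  moreover have "1 / tan y \<le> 1 / tan x"
    using tan by (intro divide_left_mono) auto
  ultimately show ?thesis
    using sum_form[of x] sum_form[of y] sin tan by simp
qed

lemma tier_sum_nonneg:
  assumes "0 \<le> x" "2 * real Nt * x \<le> pi/2"
  shows "0 \<le> tier_sum Nt x"
proof -
  have "0 \<le> cos (2 * real i * x)" if "i \<in> {1..Nt}" for i
  proof (rule cos_ge_zero)
    have "2 * real i * x \<le> 2 * real Nt * x"
      using that assms(1) by (intro mult_right_mono) auto
    then show "2 * real i * x \<le> pi/2" using assms(2) by linarith
    have "0 \<le> 2 * real i * x" using assms(1) by simp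
    then show "- (pi/2) \<le> 2 * real i * x" using pi_gt_zero by linarith
  qed
  then show ?thesis
    unfolding tier_sum_def by (intro add_nonneg_nonneg sum_nonneg) auto
qed

lemma tier_sum_antimono:
  assumes "0 \<le> x" "x \<le> y" "2 * real Nt * y \<le> pi"
  shows "tier_sum Nt y \<le> tier_sum Nt x"
proof -
  have "cos (2 * real i * y) \<le> cos (2 * real i * x)" if "i \<in> {1..Nt}" for i
  proof (rule cos_monotone_0_pi_le)
    show "0 \<le> 2 * real i * x" using assms(1) by simp
    show "2 * real i * x \<le> 2 * real i * y" using assms(2) by (intro mult_left_mono) auto
    have "2 * real i * y \<le> 2 * real Nt * y"
      using that assms(1,2) by (intro mult_right_mono) auto
    then show "2 * real i * y \<le> pi" using assms(3) by linarith
  qed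
  then show ?thesis
    unfolding tier_sum_def by (intro add_left_mono sum_mono mult_left_mono) auto
qed

lemma fL_antimono:
  assumes "1 \<le> Nt" "0 < FF" "0 < Kpd" "0 \<le> n" "0 < Lmax"
  shows "antimono_on {0<..pi/2} (fL Nt Npd FF Kpd n Lmax)"
proof (rule monotone_onI)
  fix x y assume "x \<in> {0<..pi/2}" "y \<in> {0<..pi/2}" "x \<le> y"
  then have "(n + sin (theta Nt y)) / (sin (theta Nt y) * tan (theta Nt y))
      \<le> (n + sin (theta Nt x)) / (sin (theta Nt x) * tan (theta Nt x))"
    using assms(4) theta_pos[of x Nt] theta_less_pi_half[OF assms(1), of y]
    by (intro sin_tan_quotient_antimono) auto
  moreover have "0 \<le> K1 Npd FF Kpd / Lmax"
    using assms unfolding K1_def by simp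
  ultimately show "fL Nt Npd FF Kpd n Lmax y \<le> fL Nt Npd FF Kpd n Lmax x"
    unfolding fL_def by (intro mult_left_mono)
qed

lemma fA_antimono:
  assumes "1 \<le> Nt" "0 < FF" "0 < Kpd" "0 < Amax"
  shows "antimono_on {0<..pi/2} (fA Nt Npd FF Kpd n Amax)"
proof (rule monotone_onI)
  fix x y assume xy: "x \<in> {0<..pi/2}" "y \<in> {0<..pi/2}" "x \<le> y"
  define c where "c = K2 Npd FF Kpd n / Amax"
  have "0 \<le> c" using assms unfolding c_def K2_def by simp
  have sin: "0 < sin (theta Nt x)" "sin (theta Nt x) \<le> sin (theta Nt y)"
    using xy trig_theta_pos[OF assms(1)] strict_mono_on_leD[OF strict_mono_on_sin_theta[OF assms(1)]]
    by auto
  have theta: "0 \<le> theta Nt x" "theta Nt x \<le> theta Nt y" "2 * real Nt * theta Nt y \<le> pi/2"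
    using xy theta_pos[of x Nt] mult_theta_less_pi_half[of Nt Nt y] by auto
  have "2 * real Nt * theta Nt y \<le> pi" using theta(3) pi_gt_zero by linarith
  have "0 \<le> tier_sum Nt (theta Nt y)"
    using theta_pos[of y Nt] xy(2) theta(3) by (intro tier_sum_nonneg) auto
  have "1 / sin (theta Nt y) \<le> 1 / sin (theta Nt x)"
    using sin by (intro divide_left_mono) auto
  moreover have "sqrt (c * tier_sum Nt (theta Nt y)) \<le> sqrt (c * tier_sum Nt (theta Nt x))"
    using theta(1,2) \<open>0 \<le> c\<close> \<open>2 * real Nt * theta Nt y \<le> pi\<close>
    by (intro real_sqrt_le_mono mult_left_mono tier_sum_antimono) auto
  moreover have "0 \<le> sqrt (c * tier_sum Nt (theta Nt y))"
    using \<open>0 \<le> c\<close> \<open>0 \<le> tier_sum Nt (theta Nt y)\<close> by simp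
  ultimately show "fA Nt Npd FF Kpd n Amax y \<le> fA Nt Npd FF Kpd n Amax x"
    using sin unfolding fA_def c_def[symmetric] by (intro mult_mono) auto
qed

lemma continuous_on_fL:
  assumes "1 \<le> Nt"
  shows "continuous_on {0<..pi/2} (fL Nt Npd FF Kpd n Lmax)"
  unfolding fL_def by (intro continuous_intros) (auto simp: trig_theta_nonzero[OF assms])

lemma continuous_on_fA:
  assumes "1 \<le> Nt"
  shows "continuous_on {0<..pi/2} (fA Nt Npd FF Kpd n Amax)"
  unfolding fA_def tier_sum_def by (intro continuous_intros) (auto simp: trig_theta_nonzero[OF assms])

(* Antitonicity makes the sublevel set an up-interval and continuity makes it closed,
   so the infimum is attained. *)
lemma gen_inv_le_iff:
  assumes anti: "antimono_on {0<..pi/2} f" and cont: "continuous_on {0<..pi/2} f"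
    and F: "0 < F" "F \<le> pi/2"
  shows "gen_inv f B \<le> ereal F \<longleftrightarrow> f F \<le> B"
proof
  assume "f F \<le> B"
  then show "gen_inv f B \<le> ereal F"
    unfolding gen_inv_def using F by (intro INF_lower) auto
next
  assume le: "gen_inv f B \<le> ereal F"
  show "f F \<le> B"
  proof (rule ccontr)
    assume "\<not> f F \<le> B"
    then have gap: "0 < f F - B" by simp
    obtain d where "0 < d"
      and d: "\<forall>x \<in> {0<..pi/2}. dist x F < d \<longrightarrow> dist (f x) (f F) < f F - B"
      using cont F gap unfolding continuous_on_iff by (metis greaterThanAtMost_iff)
    have near: "B < f x" if "x \<in> {0<..pi/2}" "dist x F < d" for x
      using d that by (force simp: dist_real_def abs_less_iff)
    have "ereal (F + d) \<le> gen_inv f B"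
      unfolding gen_inv_def
    proof (rule INF_greatest)
      fix x assume x: "x \<in> {F. 0 < F \<and> F \<le> pi/2 \<and> f F \<le> B}"
      have "F < x"
        using monotone_onD[OF anti, of x F] x F gap by force
      then have "\<not> dist x F < d"
        using near x by force
      then show "ereal (F + d) \<le> ereal x"
        using \<open>F < x\<close> by (simp add: dist_real_def)
    qed
    with le \<open>0 < d\<close> show False
      by (metis ereal_less_eq(3) less_add_same_cancel1 not_le order_trans)
  qed
qed

lemma L_ADR_le_iff:
  assumes "0 < B" "0 < Lmax"
  shows "L_ADR Nt Npd FF Kpd n B F \<le> Lmax \<longleftrightarrow> fL Nt Npd FF Kpd n Lmax F \<le> B"
proof -
  define X where "X = K1 Npd FF Kpd * ((n + sin (theta Nt F)) / (sin (theta Nt F) * tan (theta Nt F)))"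
  have "L_ADR Nt Npd FF Kpd n B F = X / B" "fL Nt Npd FF Kpd n Lmax F = X / Lmax"
    unfolding L_ADR_def fL_def X_def by simp_all
  then show ?thesis
    using assms by (simp add: pos_divide_le_eq mult.commute)
qed

lemma A_ADR_le_iff:
  assumes "1 \<le> Nt" "0 < FF" "0 < Kpd" "0 < Amax" "0 < B" "0 < F" "F \<le> pi/2"
  shows "A_ADR Nt Npd FF Kpd n B F \<le> Amax \<longleftrightarrow> fA Nt Npd FF Kpd n Amax F \<le> B"
proof -
  define s where "s = sin (theta Nt F)"
  define y where "y = K2 Npd FF Kpd n * tier_sum Nt (theta Nt F)"
  have "0 < s"
    unfolding s_def using trig_theta_pos assms by auto
  have "0 \<le> y"
    unfolding y_def K2_def using assms theta_pos[of F Nt] mult_theta_less_pi_half[of Nt Nt F]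
    by (intro mult_nonneg_nonneg tier_sum_nonneg) auto
  have "A_ADR Nt Npd FF Kpd n B F \<le> Amax \<longleftrightarrow> y / Amax \<le> (B * s)^2"
    unfolding A_ADR_def s_def[symmetric] y_def using assms \<open>0 < s\<close>
    by (simp add: field_simps power_mult_distrib)
  also have "\<dots> \<longleftrightarrow> sqrt (y / Amax) \<le> B * s"
    using assms \<open>0 < s\<close> real_sqrt_le_iff[of "y / Amax" "(B * s)\<^sup>2"] by simp
  also have "\<dots> \<longleftrightarrow> fA Nt Npd FF Kpd n Amax F \<le> B"
    unfolding fA_def s_def[symmetric] y_def using \<open>0 < s\<close> by (simp add: divide_le_eq mult.commute)
  finally show ?thesis .
qed

lemma fFOV_le_iff:
  assumes "1 \<le> Nt" "0 < FF" "0 < Kpd" "0 \<le> n" "0 < Lmax" "0 < Amax" "0 < B" "0 < F" "F \<le> pi/2"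
  shows "fFOV Nt Npd FF Kpd n FOVmin Lmax Amax B \<le> ereal F \<longleftrightarrow>
    FOVmin \<le> F \<and> L_ADR Nt Npd FF Kpd n B F \<le> Lmax \<and> A_ADR Nt Npd FF Kpd n B F \<le> Amax"
  using assms
  by (simp add: fFOV_def gen_inv_le_iff fL_antimono continuous_on_fL fA_antimono continuous_on_fA
      L_ADR_le_iff A_ADR_le_iff)

lemma D1_pos:
  assumes "1 \<le> Nt" "1 \<le> Npd" "0 < FF" "0 < Kpd" "0 < n" "0 < B" "0 < F" "F \<le> pi/2"
  shows "0 < D1 Nt Npd FF Kpd n B F"
  unfolding D1_def D2_def using assms trig_theta_pos[of Nt F] by simp

lemma D1_strict_antimono:
  assumes "1 \<le> Nt" "1 \<le> Npd" "0 < FF" "0 < Kpd" "0 < n" "0 < B"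
  shows "strict_antimono_on {0<..pi/2} (D1 Nt Npd FF Kpd n B)"
proof (rule monotone_onI)
  fix x y assume xy: "x \<in> {0<..pi/2}" "y \<in> {0<..pi/2}" "x < y"
  have "0 < sin (theta Nt x)" "sin (theta Nt x) < sin (theta Nt y)"
    using xy trig_theta_pos[OF assms(1)] strict_mono_onD[OF strict_mono_on_sin_theta[OF assms(1)]]
    by auto
  then have "n / sin (theta Nt y) < n / sin (theta Nt x)"
    using assms(5) by (intro divide_strict_left_mono) auto
  moreover have "0 < D2 Npd FF Kpd B"
    unfolding D2_def using assms by simp
  ultimately show "D1 Nt Npd FF Kpd n B y < D1 Nt Npd FF Kpd n B x"
    unfolding D1_def by (intro mult_strict_left_mono)
qed

lemma Pr_pos:
  assumes "1 \<le> Nt" "1 \<le> Npd" "0 < FF" "0 < Kpd" "0 < n" "0 < Pt" "0 < w" "0 < B"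
    "0 < F" "F \<le> pi/2"
  shows "0 < Pr Nt Npd FF Kpd n Pt w B F"
  unfolding Pr_def using assms D1_pos[of Nt Npd FF Kpd n B F] by simp

lemma Pr_strict_antimono:
  assumes "1 \<le> Nt" "1 \<le> Npd" "0 < FF" "0 < Kpd" "0 < n" "0 < Pt" "0 < w" "0 < B"
  shows "strict_antimono_on {0<..pi/2} (Pr Nt Npd FF Kpd n Pt w B)"
proof (rule monotone_onI)
  fix x y assume xy: "x \<in> {0<..pi/2}" "y \<in> {0<..pi/2}" "x < y"
  have "(D1 Nt Npd FF Kpd n B y)^2 < (D1 Nt Npd FF Kpd n B x)^2"
    using xy assms D1_pos[of Nt Npd FF Kpd n B y]
      monotone_onD[OF D1_strict_antimono[of Nt Npd FF Kpd n B]]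
    by (intro power_strict_mono) auto
  then show "Pr Nt Npd FF Kpd n Pt w B y < Pr Nt Npd FF Kpd n Pt w B x"
    unfolding Pr_def using assms by (simp add: divide_strict_right_mono)
qed

lemma rate_strict_antimono:
  assumes "1 \<le> Nt" "1 \<le> Npd" "0 < FF" "0 < Kpd" "0 < n" "0 < Pt" "0 < w"
    "0 < Rpd" "0 < Gam" "0 < N0" "0 < B"
  shows "strict_antimono_on {0<..pi/2} (rate Nt Npd FF Kpd n Pt w Rpd Gam N0 B)"
proof (rule monotone_onI)
  fix x y assume xy: "x \<in> {0<..pi/2}" "y \<in> {0<..pi/2}" "x < y"
  define snr where "snr F = (Rpd * Pr Nt Npd FF Kpd n Pt w B F)^2 / (Gam * N0 * B)" for F
  have "snr y < snr x"
    unfolding snr_def using xy assms Pr_pos[of Nt Npd FF Kpd n Pt w B y]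
      monotone_onD[OF Pr_strict_antimono[of Nt Npd FF Kpd n Pt w B]]
    by (intro divide_strict_right_mono power_strict_mono mult_strict_left_mono) auto
  moreover have "0 \<le> snr y"
    unfolding snr_def using assms by simp
  ultimately show "rate Nt Npd FF Kpd n Pt w Rpd Gam N0 B y < rate Nt Npd FF Kpd n Pt w Rpd Gam N0 B x"
    unfolding rate_def snr_def[symmetric] using assms by simp
qed

locale fov_reduction =
  fixes R :: "real \<Rightarrow> real \<Rightarrow> real" and g :: "real \<Rightarrow> ereal" and c M :: real
  assumes c_pos: "0 < c" and g_ge: "\<And>B. ereal c \<le> g B"
    and R_strict_antimono: "\<And>B. 0 < B \<Longrightarrow> strict_antimono_on {0<..M} (R B)"
begin

definition feasible :: "(real \<times> real) set" where
  "feasible = {(B, F). 0 < B \<and> 0 < F \<and> F \<le> M \<and> g B \<le> ereal F}"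

definition reduced_domain :: "real set" where
  "reduced_domain = {B. 0 < B \<and> g B \<le> ereal M}"

abbreviation fov :: "real \<Rightarrow> real" where
  "fov B \<equiv> real_of_ereal (g B)"

lemma reduced_domain_fov:
  assumes "B \<in> reduced_domain"
  obtains F where "g B = ereal F" "0 < F" "F \<le> M"
proof -
  have "ereal c \<le> g B" "g B \<le> ereal M"
    using g_ge assms unfolding reduced_domain_def by auto
  with c_pos that show ?thesis
    by (cases "g B") auto
qed

lemma fov_pos: "B \<in> reduced_domain \<Longrightarrow> 0 < fov B"
  by (elim reduced_domain_fov) simp

lemma fov_feasible:
  assumes "B \<in> reduced_domain"
  shows "(B, fov B) \<in> feasible"
proof -
  obtain F where "g B = ereal F" "0 < F" "F \<le> M"
    using reduced_domain_fov[OF assms] .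
  then show ?thesis
    using assms unfolding feasible_def reduced_domain_def by simp
qed

lemma feasible_reduced_domain:
  assumes "(B, F) \<in> feasible"
  shows "B \<in> reduced_domain" "fov B \<le> F"
proof -
  have "0 < B" "F \<le> M" "g B \<le> ereal F"
    using assms unfolding feasible_def by auto
  then have "g B \<le> ereal M"
    by (meson ereal_less_eq(3) order_trans)
  with \<open>0 < B\<close> show B: "B \<in> reduced_domain"
    unfolding reduced_domain_def by simp
  obtain F' where "g B = ereal F'"
    using reduced_domain_fov[OF B] by blast
  with \<open>g B \<le> ereal F\<close> show "fov B \<le> F"
    by simp
qed

lemma feasible_less_fov:
  assumes "(B, F) \<in> feasible" "F \<noteq> fov B"
  shows "R B F < R B (fov B)"
proof -
  have "0 < B" "F \<le> M"
    using assms(1) unfolding feasible_def by auto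
  moreover have "0 < fov B" "fov B < F"
    using feasible_reduced_domain[OF assms(1)] fov_pos assms(2) by auto
  ultimately show ?thesis
    using monotone_onD[OF R_strict_antimono[OF \<open>0 < B\<close>], of "fov B" F] by auto
qed

lemma feasible_le_fov: "(B, F) \<in> feasible \<Longrightarrow> R B F \<le> R B (fov B)"
  using feasible_less_fov[of B F] by (cases "F = fov B") auto

lemma SUP_feasible:
  "(SUP p \<in> feasible. ereal (R (fst p) (snd p))) = (SUP B \<in> reduced_domain. ereal (R B (fov B)))"
proof (rule SUP_eq)
  fix p assume "p \<in> feasible"
  then obtain B F where "p = (B, F)" "(B, F) \<in> feasible"
    by (cases p) auto
  then show "\<exists>B \<in> reduced_domain. ereal (R (fst p) (snd p)) \<le> ereal (R B (fov B))"
    using feasible_reduced_domain(1) feasible_le_fov by (auto intro!: bexI[of _ B])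
next
  fix B assume "B \<in> reduced_domain"
  then show "\<exists>p \<in> feasible. ereal (R B (fov B)) \<le> ereal (R (fst p) (snd p))"
    using fov_feasible by force
qed

lemma maximiser_iff:
  "((Bs, Fs) \<in> feasible \<and> (\<forall>(B, F) \<in> feasible. R B F \<le> R Bs Fs)) \<longleftrightarrow>
   (Bs \<in> reduced_domain \<and> ereal Fs = g Bs \<and> (\<forall>B \<in> reduced_domain. R B (fov B) \<le> R Bs (fov Bs)))"
proof
  assume max: "(Bs, Fs) \<in> feasible \<and> (\<forall>(B, F) \<in> feasible. R B F \<le> R Bs Fs)"
  then have Bs: "Bs \<in> reduced_domain"
    using feasible_reduced_domain(1) by blast
  have "Fs = fov Bs"
  proof (rule ccontr)
    assume "Fs \<noteq> fov Bs"
    then have "R Bs Fs < R Bs (fov Bs)"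
      using max feasible_less_fov by blast
    moreover have "R Bs (fov Bs) \<le> R Bs Fs"
      using max fov_feasible[OF Bs] by blast
    ultimately show False
      by simp
  qed
  moreover obtain F where "g Bs = ereal F"
    using reduced_domain_fov[OF Bs] by blast
  moreover have "R B (fov B) \<le> R Bs Fs" if "B \<in> reduced_domain" for B
    using max fov_feasible[OF that] by blast
  ultimately show "Bs \<in> reduced_domain \<and> ereal Fs = g Bs \<and>
      (\<forall>B \<in> reduced_domain. R B (fov B) \<le> R Bs (fov Bs))"
    using Bs by auto
next
  assume red: "Bs \<in> reduced_domain \<and> ereal Fs = g Bs \<and>
      (\<forall>B \<in> reduced_domain. R B (fov B) \<le> R Bs (fov Bs))"
  then have "fov Bs = Fs"
    by (metis real_of_ereal.simps(1))
  have "R B F \<le> R Bs Fs" if "(B, F) \<in> feasible" for B F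
  proof -
    have "R B F \<le> R B (fov B)"
      using feasible_le_fov[OF that] .
    also have "\<dots> \<le> R Bs Fs"
      using red feasible_reduced_domain(1)[OF that] \<open>fov Bs = Fs\<close> by auto
    finally show ?thesis .
  qed
  then show "(Bs, Fs) \<in> feasible \<and> (\<forall>(B, F) \<in> feasible. R B F \<le> R Bs Fs)"
    using fov_feasible[of Bs] red \<open>fov Bs = Fs\<close> by auto
qed

end

theorem theorem2:
  fixes Nt Npd :: nat and FF Kpd n Pt w Rpd Gam N0 FOVmin Lmax Amax :: real
    and R :: "real \<Rightarrow> real \<Rightarrow> real" and g :: "real \<Rightarrow> ereal"
    and Feas :: "(real \<times> real) set" and S :: "real set"
  assumes "Nt \<ge> 1" and "Npd \<ge> 1" and "0 < FF" and "FF \<le> 1" and "0 < Kpd" and "n \<ge> 1"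
    and "0 < Pt" and "0 < w" and "0 < Rpd" and "0 < Gam" and "0 < N0"
    and "0 < FOVmin" and "FOVmin \<le> pi / 2" and "0 < Lmax" and "0 < Amax"
  defines "R \<equiv> rate Nt Npd FF Kpd n Pt w Rpd Gam N0"
    and "g \<equiv> fFOV Nt Npd FF Kpd n FOVmin Lmax Amax"
    and "Feas \<equiv> {(B, FOV). 0 < B \<and> 0 < FOV \<and> FOV \<le> pi / 2 \<and> FOV \<ge> FOVmin
                   \<and> L_ADR Nt Npd FF Kpd n B FOV \<le> Lmax \<and> A_ADR Nt Npd FF Kpd n B FOV \<le> Amax}"
    and "S \<equiv> {B. 0 < B \<and> g B \<le> ereal (pi / 2)}"
  shows "(SUP p \<in> Feas. ereal (R (fst p) (snd p))) = (SUP B \<in> S. ereal (R B (real_of_ereal (g B))))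
    \<and> (\<forall>Bs FOVs. ((Bs, FOVs) \<in> Feas \<and> (\<forall>(B, FOV) \<in> Feas. R B FOV \<le> R Bs FOVs))
           \<longleftrightarrow> (Bs \<in> S \<and> ereal FOVs = g Bs
                \<and> (\<forall>B \<in> S. R B (real_of_ereal (g B)) \<le> R Bs (real_of_ereal (g Bs)))))"
proof -
  interpret fov_reduction R g FOVmin "pi/2"
  proof
    show "0 < FOVmin" by fact
    show "ereal FOVmin \<le> g B" for B
      unfolding g_def fFOV_def by simp
    show "strict_antimono_on {0<..pi/2} (R B)" if "0 < B" for B
      unfolding R_def using assms(1-3,5-11) that by (intro rate_strict_antimono) auto
  qed
  have Feas: "Feas = feasible"
    unfolding Feas_def feasible_def
    using assms(1,3,5,6,14,15) by (auto simp: g_def fFOV_le_iff)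
  have S: "S = reduced_domain"
    unfolding S_def reduced_domain_def ..
  show ?thesis
    unfolding Feas S by (intro conjI allI SUP_feasible maximiser_iff)
qed

end
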